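(* Let $\mathcal E$ be a nest on a complex Banach space $X$ and let $\mathcal J$ be a $\mathcal T(\mathcal E)$-bimodule. Let $\mathcal J_0$ be the set of finite rank operators in $\mathcal J$ and $\overline{\mathcal J_0}$ its norm closure. Then $\Phi_{\mathcal J_0}=\Phi_{\overline{\mathcal J_0}}=\Phi_{\mathcal J}$.
   Context: A nest $\mathcal E$ on $X$ is a family of closed linear subspaces of $X$, totally ordered by inclusion, containing $\{0\}$ and $X$, closed under arbitrary meets (intersections) and joins (norm-closed linear spans of unions). $\mathcal T(\mathcal E)=\{T\in\mathcal B(X): TE\subseteq E\ \forall E\in\mathcal E\}$. A $\mathcal T(\mathcal E)$-bimodule is a linear subspace $\mathcal J\subseteq\mathcal B(X)$ with $\mathcal T(\mathcal E)\mathcal J\subseteq\mathcal J$ and $\mathcal J\mathcal T(\mathcal E)\subseteq\mathcal J$ ($\mathcal J_0$ and $\overline{\mathcal J_0}$ are again bimodules). For a bimodule $\mathcal J$, $\Phi_{\mathcal J}:\mathcal E\to\mathcal E$ is $\Phi_{\mathcal J}(E)=[\mathcal JE]$, the norm-closed linear span of $\{Tx:T\in\mathcal J,x\in E\}$. *)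

theory Defs
  imports "HOL-Analysis.Analysis"
begin

text \<open>A complex Banach space is modelled as a real Banach space (type class banach)
  together with a complex structure J (multiplication by the imaginary unit),
  compatible with the norm: the norm of (a + b i) x equals |a + b i| times the norm of x.\<close>

definition cscale :: "('a::real_vector \<Rightarrow> 'a) \<Rightarrow> complex \<Rightarrow> 'a \<Rightarrow> 'a" where
  "cscale J c x = Re c *\<^sub>R x + Im c *\<^sub>R J x"

definition complex_structure :: "('a::real_normed_vector \<Rightarrow> 'a) \<Rightarrow> bool" where
  "complex_structure J \<longleftrightarrow> linear J \<and> (\<forall>x. J (J x) = - x) \<and>
     (\<forall>c x. norm (cscale J c x) = cmod c * norm x)"

definition csubspace :: "('a::real_vector \<Rightarrow> 'a) \<Rightarrow> 'a set \<Rightarrow> bool" where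
  "csubspace J S \<longleftrightarrow> subspace S \<and> (\<forall>x\<in>S. J x \<in> S)"

definition cspan :: "('a::real_vector \<Rightarrow> 'a) \<Rightarrow> 'a set \<Rightarrow> 'a set" where
  "cspan J S = span (S \<union> J ` S)"

definition closed_cspan :: "('a::real_normed_vector \<Rightarrow> 'a) \<Rightarrow> 'a set \<Rightarrow> 'a set" where
  "closed_cspan J S = closure (cspan J S)"

definition bops :: "('a::real_normed_vector \<Rightarrow> 'a) \<Rightarrow> ('a \<Rightarrow> 'a) set" where
  "bops J = {T. bounded_linear T \<and> (\<forall>x. T (J x) = J (T x))}"

definition nest :: "('a::real_normed_vector \<Rightarrow> 'a) \<Rightarrow> 'a set set \<Rightarrow> bool" where
  "nest J \<E> \<longleftrightarrow>
     (\<forall>E\<in>\<E>. closed E \<and> csubspace J E) \<and>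
     (\<forall>A\<in>\<E>. \<forall>B\<in>\<E>. A \<subseteq> B \<or> B \<subseteq> A) \<and>
     {0} \<in> \<E> \<and> UNIV \<in> \<E> \<and>
     (\<forall>\<F>. \<F> \<subseteq> \<E> \<longrightarrow> \<Inter>\<F> \<in> \<E>) \<and>
     (\<forall>\<F>. \<F> \<subseteq> \<E> \<longrightarrow> closed_cspan J (\<Union>\<F>) \<in> \<E>)"

definition nest_alg :: "('a::real_normed_vector \<Rightarrow> 'a) \<Rightarrow> 'a set set \<Rightarrow> ('a \<Rightarrow> 'a) set" where
  "nest_alg J \<E> = {T \<in> bops J. \<forall>E\<in>\<E>. T ` E \<subseteq> E}"

definition op_csubspace :: "('a::real_normed_vector \<Rightarrow> 'a) \<Rightarrow> ('a \<Rightarrow> 'a) set \<Rightarrow> bool" where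
  "op_csubspace J \<J> \<longleftrightarrow> \<J> \<subseteq> bops J \<and> (\<lambda>x. 0) \<in> \<J> \<and>
     (\<forall>S\<in>\<J>. \<forall>T\<in>\<J>. (\<lambda>x. S x + T x) \<in> \<J>) \<and>
     (\<forall>c. \<forall>T\<in>\<J>. (\<lambda>x. cscale J c (T x)) \<in> \<J>)"

definition bimodule :: "('a::real_normed_vector \<Rightarrow> 'a) \<Rightarrow> 'a set set \<Rightarrow> ('a \<Rightarrow> 'a) set \<Rightarrow> bool" where
  "bimodule J \<E> \<J> \<longleftrightarrow> op_csubspace J \<J> \<and>
     (\<forall>A\<in>nest_alg J \<E>. \<forall>T\<in>\<J>. A \<circ> T \<in> \<J> \<and> T \<circ> A \<in> \<J>)"

definition finite_rank :: "('a::real_vector \<Rightarrow> 'a) \<Rightarrow> bool" where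
  "finite_rank T \<longleftrightarrow> (\<exists>F. finite F \<and> range T \<subseteq> span F)"

definition finite_rank_part :: "('a::real_vector \<Rightarrow> 'a) set \<Rightarrow> ('a \<Rightarrow> 'a) set" where
  "finite_rank_part \<J> = {T \<in> \<J>. finite_rank T}"

definition op_closure :: "('a::real_normed_vector \<Rightarrow> 'a) \<Rightarrow> ('a \<Rightarrow> 'a) set \<Rightarrow> ('a \<Rightarrow> 'a) set" where
  "op_closure J \<J> = {T \<in> bops J. \<forall>e>0. \<exists>S\<in>\<J>. onorm (\<lambda>x. T x - S x) < e}"

definition Phi :: "('a::real_normed_vector \<Rightarrow> 'a) \<Rightarrow> ('a \<Rightarrow> 'a) set \<Rightarrow> 'a set \<Rightarrow> 'a set" where
  "Phi J \<J> E = closed_cspan J {T x | T x. T \<in> \<J> \<and> x \<in> E}"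

end

theory Submission
  imports Defs
begin

text \<open>Since \<open>\<Phi>\<^sub>\<A>(E)\<close> only depends on the closure of \<open>{T x | T \<in> \<A>, x \<in> E}\<close>, passing from
  \<open>\<J>\<^sub>0\<close> to its norm closure does not change \<open>\<Phi>\<close>. For \<open>\<Phi>\<^sub>\<J> \<subseteq> \<Phi>\<^sub>\<J>\<^sub>0\<close> take \<open>T \<in> \<J>\<close>
  and \<open>x \<in> E\<close>. If \<open>C\<close> is a closed subspace, \<open>w \<in> E - C\<close>, and every member of the nest either lies
  in \<open>C\<close> or contains \<open>u\<close>, a Hahn-Banach functional vanishing on \<open>C\<close> with value 1 at \<open>w\<close> yields a
  rank-one operator \<open>R\<close> in the nest algebra with \<open>R w = u\<close>; then \<open>T u = (T R) w\<close> with \<open>T R \<in> \<J>\<^sub>0\<close>.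
  This applies with \<open>C = E\<^sub>-\<close>, \<open>u = w = x\<close> when \<open>x \<notin> E\<^sub>-\<close>, and with \<open>C = K\<close> for each member
  \<open>K \<subset> E\<close>, so by continuity of \<open>T\<close> also when \<open>x \<in> E\<^sub>-\<close>, the closed span of those \<open>K\<close>.\<close>

section \<open>Hahn-Banach extension\<close>

definition sublinear :: "('a::real_vector \<Rightarrow> real) \<Rightarrow> bool" where
  "sublinear p \<longleftrightarrow> (\<forall>x y. p (x + y) \<le> p x + p y) \<and> (\<forall>a x. 0 < a \<longrightarrow> p (a *\<^sub>R x) = a * p x)"

lemma sublinear_zero:
  assumes "sublinear p" shows "p 0 = 0"
proof -
  have "p ((2::real) *\<^sub>R 0) = 2 * p 0"
    using assms zero_less_numeral unfolding sublinear_def by blast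
  then show ?thesis by simp
qed

lemma sublinear_scale_le:
  assumes "sublinear p" shows "a * p x \<le> p (a *\<^sub>R x)"
proof (cases a "0::real" rule: linorder_cases)
  case less
  have "0 = p (a *\<^sub>R x + (- a) *\<^sub>R x)"
    using sublinear_zero[OF assms] by (simp flip: scaleR_add_left)
  also have "\<dots> \<le> p (a *\<^sub>R x) + p ((- a) *\<^sub>R x)" using assms by (simp only: sublinear_def)
  also have "p ((- a) *\<^sub>R x) = - a * p x"
    using assms less neg_0_less_iff_less unfolding sublinear_def by blast
  finally show ?thesis by simp
qed (use assms sublinear_zero[OF assms] in \<open>auto simp: sublinear_def\<close>)

text \<open>Partial linear functionals dominated by \<open>p\<close> are represented by their graphs, so that the
  union of a chain of extensions is again one.\<close>
definition dominated_graph :: "('a::real_vector \<Rightarrow> real) \<Rightarrow> ('a \<times> real) set \<Rightarrow> bool" where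
  "dominated_graph p G \<longleftrightarrow> subspace G \<and> single_valued G \<and> (\<forall>(x, y) \<in> G. y \<le> p x)"

lemma subspace_Union_chain:
  assumes "C \<noteq> {}" and "\<And>S. S \<in> C \<Longrightarrow> subspace S"
    and "\<And>S T. S \<in> C \<Longrightarrow> T \<in> C \<Longrightarrow> S \<subseteq> T \<or> T \<subseteq> S"
  shows "subspace (\<Union>C)"
  unfolding subspace_def
proof (intro conjI ballI allI)
  show "0 \<in> \<Union>C" using assms(1,2) subspace_0 by blast
next
  fix x y assume "x \<in> \<Union>C" "y \<in> \<Union>C"
  then obtain S T where "S \<in> C" "T \<in> C" "x \<in> S" "y \<in> T" by blast
  then show "x + y \<in> \<Union>C" using assms(2) assms(3)[of S T] subspace_add by (metis UnionI subsetD)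
next
  fix c x assume "x \<in> \<Union>C"
  then show "c *\<^sub>R x \<in> \<Union>C" using assms(2) subspace_scale by blast
qed

lemma dominated_graph_Union_chain:
  assumes "C \<noteq> {}" and "\<And>G. G \<in> C \<Longrightarrow> dominated_graph p G"
    and "\<And>G H. G \<in> C \<Longrightarrow> H \<in> C \<Longrightarrow> G \<subseteq> H \<or> H \<subseteq> G"
  shows "dominated_graph p (\<Union>C)"
  unfolding dominated_graph_def
proof (intro conjI single_valuedI)
  show "subspace (\<Union>C)"
    using assms by (intro subspace_Union_chain) (auto simp: dominated_graph_def)
next
  fix x y y' assume "(x, y) \<in> \<Union>C" "(x, y') \<in> \<Union>C"
  then obtain G H where "G \<in> C" "H \<in> C" "(x, y) \<in> G" "(x, y') \<in> H" by blast
  then show "y = y'"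
    using assms(2) assms(3)[of G H] unfolding dominated_graph_def by (metis single_valuedD subsetD)
next
  show "\<forall>(x, y) \<in> \<Union>C. y \<le> p x" using assms(2) unfolding dominated_graph_def by blast
qed

definition graph_extension :: "('a::real_vector \<times> real) set \<Rightarrow> 'a \<Rightarrow> real \<Rightarrow> ('a \<times> real) set" where
  "graph_extension G z c = {(x + t *\<^sub>R z, y + t * c) | x y t. (x, y) \<in> G}"

lemma subset_graph_extension: "G \<subseteq> graph_extension G z c"
  unfolding graph_extension_def by force

lemma in_graph_extension: "(0, 0) \<in> G \<Longrightarrow> (z, c) \<in> graph_extension G z c"
  unfolding graph_extension_def by force

lemma graph_extension_eq_sums:
  "graph_extension G z c = {g + h | g h. g \<in> G \<and> h \<in> span {(z, c)}}"
proof (intro set_eqI iffI)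
  fix u assume "u \<in> graph_extension G z c"
  then obtain x y t where "u = (x, y) + t *\<^sub>R (z, c)" "(x, y) \<in> G"
    unfolding graph_extension_def by auto
  then show "u \<in> {g + h | g h. g \<in> G \<and> h \<in> span {(z, c)}}"
    unfolding span_singleton by blast
next
  fix u assume "u \<in> {g + h | g h. g \<in> G \<and> h \<in> span {(z, c)}}"
  then obtain x y t where "u = (x, y) + t *\<^sub>R (z, c)" "(x, y) \<in> G"
    unfolding span_singleton by auto
  then show "u \<in> graph_extension G z c" unfolding graph_extension_def by auto
qed

lemma subspace_graph_extension: "subspace G \<Longrightarrow> subspace (graph_extension G z c)"
  unfolding graph_extension_eq_sums by (intro subspace_sums subspace_span)

lemma single_valued_graph_extension:
  assumes "subspace G" and "single_valued G" and "z \<notin> Domain G"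
  shows "single_valued (graph_extension G z c)"
proof (rule single_valuedI)
  fix u v v' assume "(u, v) \<in> graph_extension G z c" "(u, v') \<in> graph_extension G z c"
  then obtain x1 y1 t1 x2 y2 t2 where e: "u = x1 + t1 *\<^sub>R z" "v = y1 + t1 * c"
    "u = x2 + t2 *\<^sub>R z" "v' = y2 + t2 * c" and m: "(x1, y1) \<in> G" "(x2, y2) \<in> G"
    unfolding graph_extension_def by blast
  have "t1 = t2"
  proof (rule ccontr)
    assume ne: "t1 \<noteq> t2"
    have "(x2, y2) - (x1, y1) \<in> G" using assms(1) m by (intro subspace_diff)
    then have "(1 / (t1 - t2)) *\<^sub>R (x2 - x1, y2 - y1) \<in> G" using assms(1) subspace_scale by fastforce
    moreover have "(t1 - t2) *\<^sub>R z = x2 - x1" using e by (simp add: algebra_simps)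
    moreover have "z = (1 / (t1 - t2)) *\<^sub>R ((t1 - t2) *\<^sub>R z)" using ne by simp
    ultimately have "(z, (1 / (t1 - t2)) * (y2 - y1)) \<in> G" by simp
    then show False using assms(3) by blast
  qed
  then have "x1 = x2" using e by simp
  then show "v = v'" using e m single_valuedD[OF assms(2)] \<open>t1 = t2\<close> by metis
qed

lemma dominated_graph_extension_bound:
  assumes "sublinear p" and "dominated_graph p G"
  obtains c where "\<And>x y. (x, y) \<in> G \<Longrightarrow> y - p (x - z) \<le> c"
    and "\<And>x y. (x, y) \<in> G \<Longrightarrow> c \<le> p (x + z) - y"
proof -
  have G: "subspace G" "\<And>x y. (x, y) \<in> G \<Longrightarrow> y \<le> p x"
    using assms(2) by (auto simp: dominated_graph_def)
  define L where "L = {y - p (x - z) | x y. (x, y) \<in> G}"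
  have sep: "l \<le> p (x + z) - y" if "l \<in> L" "(x, y) \<in> G" for l x y
  proof -
    obtain x' y' where l: "l = y' - p (x' - z)" "(x', y') \<in> G" using \<open>l \<in> L\<close> L_def by blast
    have "(x', y') + (x, y) \<in> G" using l(2) that(2) G(1) by (rule subspace_add[rotated])
    then have "y' + y \<le> p ((x' - z) + (x + z))" using G(2) by simp
    also have "\<dots> \<le> p (x' - z) + p (x + z)" using assms(1) by (simp only: sublinear_def)
    finally show ?thesis using l(1) by simp
  qed
  have "(0, 0) \<in> G" using subspace_0[OF G(1)] by (simp add: zero_prod_def)
  then have "L \<noteq> {}" and "bdd_above L" using sep unfolding L_def bdd_above_def by blast+
  show ?thesis
  proof (rule that[of "Sup L"])
    fix x y assume "(x, y) \<in> G"
    then show "y - p (x - z) \<le> Sup L" using \<open>bdd_above L\<close> by (intro cSup_upper) (auto simp: L_def)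
    show "Sup L \<le> p (x + z) - y" using \<open>L \<noteq> {}\<close> sep \<open>(x, y) \<in> G\<close> by (intro cSup_least) auto
  qed
qed

lemma graph_extension_dominated:
  assumes "sublinear p" and "dominated_graph p G" and "(u, v) \<in> graph_extension G z c"
    and lower: "\<And>x y. (x, y) \<in> G \<Longrightarrow> y - p (x - z) \<le> c"
    and upper: "\<And>x y. (x, y) \<in> G \<Longrightarrow> c \<le> p (x + z) - y"
  shows "v \<le> p u"
proof -
  obtain x y t where e: "u = x + t *\<^sub>R z" "v = y + t * c" and m: "(x, y) \<in> G"
    using assms(3) unfolding graph_extension_def by blast
  have "subspace G" and "y \<le> p x" using assms(2) m by (auto simp: dominated_graph_def)
  then have G: "\<And>s. (s *\<^sub>R x, s * y) \<in> G" "y \<le> p x"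
    using subspace_scale[OF _ m] by auto
  have hom: "p (s *\<^sub>R w) = s * p w" if "0 < s" for s w
    using assms(1) that by (simp add: sublinear_def)
  consider "t = 0" | "0 < t" | "t < 0" by linarith
  then show ?thesis
  proof cases
    case 1 then show ?thesis using e G(2) by simp
  next
    case 2
    have "c \<le> p ((1 / t) *\<^sub>R x + z) - (1 / t) * y" by (rule upper[OF G(1)])
    then have "t * c \<le> t * (p ((1 / t) *\<^sub>R x + z) - (1 / t) * y)" using 2 by simp
    also have "\<dots> = p (t *\<^sub>R ((1 / t) *\<^sub>R x + z)) - y" using 2 by (simp add: hom right_diff_distrib)
    also have "t *\<^sub>R ((1 / t) *\<^sub>R x + z) = u" using e 2 by (simp add: scaleR_add_right)
    finally show ?thesis using e by simp
  next
    case 3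
    define s where "s = - t"
    have s: "0 < s" "t = - s" using 3 by (auto simp: s_def)
    have "(1 / s) * y - p ((1 / s) *\<^sub>R x - z) \<le> c" by (rule lower[OF G(1)])
    then have "s * ((1 / s) * y - p ((1 / s) *\<^sub>R x - z)) \<le> s * c" using s(1) by simp
    moreover have "s * p ((1 / s) *\<^sub>R x - z) = p (s *\<^sub>R ((1 / s) *\<^sub>R x - z))"
      by (rule hom[OF s(1), symmetric])
    moreover have "s *\<^sub>R ((1 / s) *\<^sub>R x - z) = u" using e s by (simp add: scaleR_diff_right)
    ultimately show ?thesis using e s by (simp add: right_diff_distrib)
  qed
qed

lemma dominated_graph_extend:
  assumes "sublinear p" and "dominated_graph p G" and "z \<notin> Domain G"
  obtains c where "dominated_graph p (graph_extension G z c)"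
proof -
  obtain c where c: "\<And>x y. (x, y) \<in> G \<Longrightarrow> y - p (x - z) \<le> c"
    "\<And>x y. (x, y) \<in> G \<Longrightarrow> c \<le> p (x + z) - y"
    using dominated_graph_extension_bound[OF assms(1,2)] by blast
  have "dominated_graph p (graph_extension G z c)"
    unfolding dominated_graph_def
  proof (intro conjI ballI)
    show "subspace (graph_extension G z c)"
      using assms(2) by (simp add: dominated_graph_def subspace_graph_extension)
    show "single_valued (graph_extension G z c)"
      using assms(2,3) by (simp add: dominated_graph_def single_valued_graph_extension)
  next
    fix u assume "u \<in> graph_extension G z c"
    then show "case u of (x, y) \<Rightarrow> y \<le> p x"
      by (cases u) (auto intro: graph_extension_dominated[OF assms(1,2)] c)
  qed
  then show ?thesis by (rule that)
qed

lemma linear_of_total_graph: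
  assumes G: "subspace G" and "single_valued G" and "Domain G = UNIV"
  obtains g where "linear g" "\<And>x. (x, g x) \<in> G"
proof -
  define g where "g x = (THE y. (x, y) \<in> G)" for x
  have gG: "(x, g x) \<in> G" for x
    unfolding g_def using assms(2,3) by (metis Domain_iff UNIV_I single_valuedD theI)
  have geq: "g x = y" if "(x, y) \<in> G" for x y using single_valuedD[OF assms(2) gG that] .
  have "linear g"
  proof (rule linearI)
    fix x y
    have "(x, g x) + (y, g y) \<in> G" by (intro subspace_add G gG)
    then show "g (x + y) = g x + g y" using geq by simp
  next
    fix a x
    have "a *\<^sub>R (x, g x) \<in> G" using G gG by (rule subspace_scale)
    then show "g (a *\<^sub>R x) = a *\<^sub>R g x" using geq by simp
  qed
  then show ?thesis using gG by (rule that)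
qed

theorem Hahn_Banach_sublinear:
  assumes p: "sublinear p" and G0: "dominated_graph p G0"
  obtains g where "linear g" "\<And>x. g x \<le> p x" "\<And>x y. (x, y) \<in> G0 \<Longrightarrow> g x = y"
proof -
  let ?A = "{G. dominated_graph p G \<and> G0 \<subseteq> G}"
  have "\<exists>M\<in>?A. \<forall>G\<in>?A. M \<subseteq> G \<longrightarrow> G = M"
  proof (rule subset_Zorn_nonempty)
    show "?A \<noteq> {}" using G0 by blast
  next
    fix C assume C: "C \<noteq> {}" "subset.chain ?A C"
    have "dominated_graph p (\<Union>C)"
      using C(1) by (rule dominated_graph_Union_chain) (use C(2) in \<open>auto simp: subset_chain_def\<close>)
    moreover have "G0 \<subseteq> \<Union>C" using C unfolding subset_chain_def by blast
    ultimately show "\<Union>C \<in> ?A" by blast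
  qed
  then obtain M where "M \<in> ?A" and max: "\<And>G. G \<in> ?A \<Longrightarrow> M \<subseteq> G \<Longrightarrow> G = M"
    by (metis (lifting))
  then have M: "dominated_graph p M" "subspace M" "single_valued M" "G0 \<subseteq> M"
    by (simp_all add: dominated_graph_def)
  have "x \<in> Domain M" for x
  proof (rule ccontr)
    assume x: "x \<notin> Domain M"
    then obtain c where ext: "dominated_graph p (graph_extension M x c)"
      using dominated_graph_extend[OF p M(1)] by blast
    have "G0 \<subseteq> graph_extension M x c" using M(4) subset_graph_extension by (rule subset_trans)
    with ext have "graph_extension M x c = M" using max subset_graph_extension by blast
    moreover have "(x, c) \<in> graph_extension M x c"
      using subspace_0[OF M(2)] by (intro in_graph_extension) (simp add: zero_prod_def)
    ultimately show False using x by blast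
  qed
  then obtain g where "linear g" and gM: "\<And>x. (x, g x) \<in> M"
    using linear_of_total_graph[OF M(2,3)] by blast
  moreover have "g x \<le> p x" for x using M(1) gM by (auto simp: dominated_graph_def)
  moreover have "g x = y" if "(x, y) \<in> G0" for x y
    using single_valuedD[OF M(3)] M(4) gM that by blast
  ultimately show ?thesis using that by blast
qed

lemma dominated_graph_ray:
  assumes "sublinear p" shows "dominated_graph p (span {(w, p w)})"
  unfolding dominated_graph_def
proof (intro conjI single_valuedI ballI)
  show "subspace (span {(w, p w)})" by (rule subspace_span)
next
  fix x y y' assume "(x, y) \<in> span {(w, p w)}" "(x, y') \<in> span {(w, p w)}"
  then obtain t t' where "(x, y) = t *\<^sub>R (w, p w)" "(x, y') = t' *\<^sub>R (w, p w)"
    unfolding span_singleton by blast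
  then have t: "x = t *\<^sub>R w" "y = t * p w" "x = t' *\<^sub>R w" "y' = t' * p w" by simp_all
  show "y = y'"
  proof (cases "w = 0")
    case True then show ?thesis using t sublinear_zero[OF assms] by simp
  next
    case False then have "t = t'" using t by simp
    then show ?thesis using t by simp
  qed
next
  fix u assume "u \<in> span {(w, p w)}"
  then show "case u of (x, y) \<Rightarrow> y \<le> p x"
    using sublinear_scale_le[OF assms] unfolding span_singleton by auto
qed

corollary Hahn_Banach_norming:
  assumes "sublinear p"
  obtains g where "linear g" "\<And>x. g x \<le> p x" "g w = p w"
proof -
  obtain g where g: "linear g" "\<And>x. g x \<le> p x" "\<And>x y. (x, y) \<in> span {(w, p w)} \<Longrightarrow> g x = y"
    using Hahn_Banach_sublinear[OF assms dominated_graph_ray[OF assms]] by blast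
  have "g w = p w" using g(3) span_base by blast
  with g(1,2) show ?thesis by (rule that)
qed

lemma infdist_greatest: "A \<noteq> {} \<Longrightarrow> (\<And>a. a \<in> A \<Longrightarrow> d \<le> dist x a) \<Longrightarrow> d \<le> infdist x A"
  by (simp add: infdist_notempty cINF_greatest)

lemma sublinear_infdist_subspace:
  fixes C :: "'a::real_normed_vector set"
  assumes C: "subspace C"
  shows "sublinear (\<lambda>x. infdist x C)"
proof -
  have ne: "C \<noteq> {}" using subspace_0[OF C] by blast
  have shift: "infdist (x + b) C \<le> infdist x C" if "b \<in> C" for x b
    using ne
  proof (rule infdist_greatest)
    fix a assume "a \<in> C"
    then have "infdist (x + b) C \<le> dist (x + b) (a + b)"
      using that C by (intro infdist_le subspace_add)
    then show "infdist (x + b) C \<le> dist x a" by simp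
  qed
  have add: "infdist (x + y) C \<le> infdist x C + infdist y C" for x y
  proof -
    have "infdist (x + y) C - infdist x C \<le> infdist y C"
      using ne
    proof (rule infdist_greatest)
      fix b assume "b \<in> C"
      have "infdist (x + y) C \<le> infdist (x + b) C + dist (x + y) (x + b)" by (rule infdist_triangle)
      also have "\<dots> \<le> infdist x C + dist y b" using shift[OF \<open>b \<in> C\<close>] by (simp add: dist_norm)
      finally show "infdist (x + y) C - infdist x C \<le> dist y b" by simp
    qed
    then show ?thesis by simp
  qed
  have scale_le: "infdist (a *\<^sub>R x) C \<le> a * infdist x C" if "0 < a" for a x
  proof -
    have "infdist (a *\<^sub>R x) C / a \<le> infdist x C"
      using ne
    proof (rule infdist_greatest)
      fix b assume "b \<in> C"
      then have "infdist (a *\<^sub>R x) C \<le> dist (a *\<^sub>R x) (a *\<^sub>R b)"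
        using C by (intro infdist_le subspace_scale)
      also have "\<dots> = a * dist x b" using that by (simp add: dist_norm flip: scaleR_diff_right)
      finally show "infdist (a *\<^sub>R x) C / a \<le> dist x b" using that by (simp add: field_simps)
    qed
    then show ?thesis using that by (simp add: field_simps)
  qed
  have "infdist (a *\<^sub>R x) C = a * infdist x C" if "0 < a" for a x
  proof (rule antisym)
    show "infdist (a *\<^sub>R x) C \<le> a * infdist x C" using that by (rule scale_le)
    have "infdist x C = infdist ((1 / a) *\<^sub>R (a *\<^sub>R x)) C" using that by simp
    also have "\<dots> \<le> (1 / a) * infdist (a *\<^sub>R x) C" using that by (intro scale_le) simp
    finally show "a * infdist x C \<le> infdist (a *\<^sub>R x) C" using that by (simp add: field_simps)
  qed
  with add show ?thesis by (simp add: sublinear_def)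
qed

lemma bounded_functional_separating:
  fixes C :: "'a::real_normed_vector set"
  assumes "closed C" and C: "subspace C" and "w \<notin> C"
  obtains g :: "'a \<Rightarrow> real" where "bounded_linear g" "\<And>c. c \<in> C \<Longrightarrow> g c = 0" "g w = 1"
proof -
  define d where "d x = infdist x C" for x
  obtain f where f: "linear f" "\<And>x. f x \<le> d x" "f w = d w"
    using Hahn_Banach_norming[OF sublinear_infdist_subspace[OF C]] unfolding d_def by blast
  have "0 \<in> C" using subspace_0[OF C] .
  then have dw: "0 < d w" unfolding d_def using assms(1,3) by (intro infdist_pos_not_in_closed) auto
  have d_le: "d x \<le> norm x" for x unfolding d_def using infdist_le[OF \<open>0 \<in> C\<close>, of x] by simp
  have "\<bar>f x\<bar> \<le> norm x" for x
    using f(2)[of x] f(2)[of "- x"] d_le[of x] d_le[of "- x"] linear_neg[OF f(1), of x]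
    by (auto simp: abs_le_iff)
  then have "bounded_linear f"
    using f(1) by (intro bounded_linear_intro[where K = 1]) (auto simp: linear_add linear_scale)
  then have "bounded_linear (\<lambda>x. f x / d w)" by (rule bounded_linear_compose[OF bounded_linear_divide])
  moreover have "f c / d w = 0" if "c \<in> C" for c
  proof -
    have "d c = 0" "d (- c) = 0" unfolding d_def using that subspace_neg[OF C] by auto
    then show ?thesis using f(2)[of c] f(2)[of "- c"] linear_neg[OF f(1), of c] by simp
  qed
  moreover have "f w / d w = 1" using f(3) dw by simp
  ultimately show ?thesis by (rule that)
qed

section \<open>Closed complex spans and \<open>\<Phi>\<close>\<close>

lemma subspace_closure:
  fixes S :: "'a::real_normed_vector set"
  assumes "subspace S" shows "subspace (closure S)"
  unfolding subspace_def
proof (intro conjI ballI allI)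
  show "0 \<in> closure S" using assms closure_subset subspace_0 by blast
next
  fix x y assume "x \<in> closure S" "y \<in> closure S"
  then obtain f g where f: "\<forall>n. f n \<in> S" "f \<longlonglongrightarrow> x" and g: "\<forall>n. g n \<in> S" "g \<longlonglongrightarrow> y"
    by (auto simp: closure_sequential)
  have "\<forall>n. f n + g n \<in> S" using f g assms subspace_add by blast
  moreover have "(\<lambda>n. f n + g n) \<longlonglongrightarrow> x + y" using f g tendsto_add by blast
  ultimately show "x + y \<in> closure S" by (auto simp: closure_sequential)
next
  fix c x assume "x \<in> closure S"
  then obtain f where f: "\<forall>n. f n \<in> S" "f \<longlonglongrightarrow> x" by (auto simp: closure_sequential)
  have "\<forall>n. c *\<^sub>R f n \<in> S" using f assms subspace_scale by blast
  moreover have "(\<lambda>n. c *\<^sub>R f n) \<longlonglongrightarrow> c *\<^sub>R x" using f tendsto_scaleR tendsto_const by blast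
  ultimately show "c *\<^sub>R x \<in> closure S" by (auto simp: closure_sequential)
qed

lemma complex_structureD:
  assumes "complex_structure J"
  shows "linear J" and "J (J x) = - x" and "norm (J x) = norm x" and "bounded_linear J"
proof -
  show lin: "linear J" and "J (J x) = - x" using assms by (auto simp: complex_structure_def)
  have norm: "norm (J y) = norm y" for y
  proof -
    have "norm (cscale J \<i> y) = cmod \<i> * norm y" using assms by (simp add: complex_structure_def)
    then show ?thesis by (simp add: cscale_def)
  qed
  then show "norm (J x) = norm x" .
  show "bounded_linear J"
    using lin norm by (intro bounded_linear_intro[where K = 1]) (auto simp: linear_add linear_scale)
qed

lemma closed_cspan_mono: "S \<subseteq> T \<Longrightarrow> closed_cspan J S \<subseteq> closed_cspan J T"
  unfolding closed_cspan_def cspan_def by (intro closure_mono span_mono Un_mono image_mono)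

lemma closed_cspan_superset: "S \<subseteq> closed_cspan J S"
  unfolding closed_cspan_def cspan_def using span_superset closure_subset by blast

lemma closed_cspan_least:
  assumes "closed Y" and "csubspace J Y" and "S \<subseteq> Y"
  shows "closed_cspan J S \<subseteq> Y"
proof -
  have "S \<union> J ` S \<subseteq> Y" and "subspace Y" using assms(2,3) by (auto simp: csubspace_def)
  then have "cspan J S \<subseteq> Y" unfolding cspan_def by (rule span_minimal)
  then show ?thesis unfolding closed_cspan_def using assms(1) by (rule closure_minimal)
qed

lemma csubspace_closed_cspan:
  assumes J: "complex_structure J"
  shows "csubspace J (closed_cspan J S)"
proof -
  let ?Y = "cspan J S"
  have "J ` (S \<union> J ` S) \<subseteq> J ` S \<union> uminus ` S"
    using complex_structureD(2)[OF J] by (auto simp: image_image)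
  also have "\<dots> \<subseteq> ?Y" unfolding cspan_def by (auto intro: span_base span_neg)
  finally have "J ` (S \<union> J ` S) \<subseteq> ?Y" .
  then have "J ` ?Y \<subseteq> ?Y"
    unfolding cspan_def linear_span_image[OF complex_structureD(1)[OF J], symmetric]
    by (intro span_minimal subspace_span)
  then have "J ` closure ?Y \<subseteq> closure ?Y"
    using closure_bounded_linear_image_subset[OF complex_structureD(4)[OF J], of ?Y] closure_mono
    by blast
  then show ?thesis
    unfolding csubspace_def closed_cspan_def cspan_def
    by (auto intro: subspace_closure subspace_span)
qed

lemma Phi_eq_closed_cspan: "Phi J A E = closed_cspan J (\<Union>T\<in>A. T ` E)"
  unfolding Phi_def by (rule arg_cong[where f = "closed_cspan J"]) auto

lemma Phi_mono: "A \<subseteq> B \<Longrightarrow> Phi J A E \<subseteq> Phi J B E"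
  unfolding Phi_eq_closed_cspan by (rule closed_cspan_mono) auto

lemma apply_in_Phi: "T \<in> A \<Longrightarrow> x \<in> E \<Longrightarrow> T x \<in> Phi J A E"
  unfolding Phi_eq_closed_cspan by (rule subsetD[OF closed_cspan_superset]) auto

lemma closed_Phi: "closed (Phi J A E)"
  by (simp add: Phi_def closed_cspan_def)

lemma csubspace_Phi: "complex_structure J \<Longrightarrow> csubspace J (Phi J A E)"
  unfolding Phi_def by (rule csubspace_closed_cspan)

lemma Phi_least:
  assumes "complex_structure J" and "\<And>T x. T \<in> B \<Longrightarrow> x \<in> E \<Longrightarrow> T x \<in> Phi J A E"
  shows "Phi J B E \<subseteq> Phi J A E"
  unfolding Phi_eq_closed_cspan[of J B]
proof (rule closed_cspan_least)
  show "closed (Phi J A E)" by (rule closed_Phi)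
  show "csubspace J (Phi J A E)" using assms(1) by (rule csubspace_Phi)
qed (auto intro: assms(2))

lemma apply_op_closure_in_closure:
  assumes "A \<subseteq> bops J" and "T \<in> op_closure J A"
  shows "T x \<in> closure ((\<lambda>S. S x) ` A)"
  unfolding closure_approachable
proof (intro allI impI)
  fix e :: real assume "0 < e"
  define \<delta> where "\<delta> = e / (norm x + 1)"
  have "0 < \<delta>" using \<open>0 < e\<close> by (simp add: \<delta>_def add_nonneg_pos)
  then obtain S where S: "S \<in> A" "onorm (\<lambda>x. T x - S x) < \<delta>"
    using assms(2) by (auto simp: op_closure_def)
  have "bounded_linear (\<lambda>x. T x - S x)"
    using assms S(1) by (auto simp: op_closure_def bops_def intro: bounded_linear_sub)
  then have "norm (T x - S x) \<le> onorm (\<lambda>x. T x - S x) * norm x" by (rule onorm)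
  then have "dist (S x) (T x) \<le> onorm (\<lambda>x. T x - S x) * norm x"
    by (simp add: dist_norm norm_minus_commute)
  also have "\<dots> \<le> \<delta> * norm x" using S(2) by (intro mult_right_mono) auto
  also have "\<dots> < \<delta> * (norm x + 1)" using \<open>0 < \<delta>\<close> by simp
  also have "\<dots> = e" using norm_ge_zero[of x] unfolding \<delta>_def by (smt (verit) nonzero_eq_divide_eq)
  finally show "\<exists>y\<in>(\<lambda>S. S x) ` A. dist y (T x) < e" using S(1) by blast
qed

lemma subset_op_closure: "A \<subseteq> bops J \<Longrightarrow> A \<subseteq> op_closure J A"
  unfolding op_closure_def by (force simp: onorm_zero)

lemma Phi_op_closure:
  assumes J: "complex_structure J" and "A \<subseteq> bops J"
  shows "Phi J (op_closure J A) E = Phi J A E"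
proof
  show "Phi J A E \<subseteq> Phi J (op_closure J A) E" using assms(2) by (intro Phi_mono subset_op_closure)
  show "Phi J (op_closure J A) E \<subseteq> Phi J A E"
  proof (rule Phi_least[OF J])
    fix T x assume "T \<in> op_closure J A" "x \<in> E"
    have "(\<lambda>S. S x) ` A \<subseteq> Phi J A E" using \<open>x \<in> E\<close> apply_in_Phi by blast
    then have "closure ((\<lambda>S. S x) ` A) \<subseteq> Phi J A E"
      using closed_Phi by (rule closure_minimal)
    then show "T x \<in> Phi J A E" using apply_op_closure_in_closure[OF assms(2) \<open>T \<in> op_closure J A\<close>] by blast
  qed
qed

section \<open>Rank-one operators in the nest algebra\<close>

text \<open>The complex-linear rank-one operator \<open>z \<mapsto> \<phi>(z) u\<close>, where \<open>\<phi> = g - i (g \<circ> J)\<close> is the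
  complex functional whose real part is \<open>g\<close>.\<close>
definition cx_rank_one :: "('a::real_vector \<Rightarrow> 'a) \<Rightarrow> ('a \<Rightarrow> real) \<Rightarrow> 'a \<Rightarrow> 'a \<Rightarrow> 'a" where
  "cx_rank_one J g u z = g z *\<^sub>R u - g (J z) *\<^sub>R J u"

lemma cx_rank_one_bops:
  assumes J: "complex_structure J" and g: "bounded_linear g"
  shows "cx_rank_one J g u \<in> bops J"
  unfolding bops_def
proof (intro CollectI conjI allI)
  have "bounded_linear (\<lambda>z. g z *\<^sub>R u)"
    by (rule bounded_linear_compose[OF bounded_linear_scaleR_left g])
  moreover have "bounded_linear (\<lambda>z. g (J z) *\<^sub>R J u)"
    by (rule bounded_linear_compose[OF bounded_linear_scaleR_left
          bounded_linear_compose[OF g complex_structureD(4)[OF J]]])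
  ultimately show "bounded_linear (cx_rank_one J g u)"
    unfolding cx_rank_one_def[abs_def] by (rule bounded_linear_sub)
  have "linear g" "linear J" using g complex_structureD(1)[OF J] by (auto intro: bounded_linear.linear)
  then show "cx_rank_one J g u (J z) = J (cx_rank_one J g u z)" for z
    by (simp add: cx_rank_one_def complex_structureD(2)[OF J] linear_neg[of g] linear_diff[of J]
        linear_scale[of J])
qed

lemma cx_rank_one_in_span: "cx_rank_one J g u z \<in> span {u, J u}"
  unfolding cx_rank_one_def by (intro span_diff span_scale span_base) simp_all

lemma cx_rank_one_in_csubspace:
  assumes "csubspace J G" and "u \<in> G"
  shows "cx_rank_one J g u z \<in> G"
proof -
  have "subspace G" "J u \<in> G" using assms by (auto simp: csubspace_def)
  then show ?thesis unfolding cx_rank_one_def using assms(2) by (intro subspace_diff subspace_scale)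
qed

lemma cx_rank_one_attains:
  assumes J: "complex_structure J" and "g w = 1"
  obtains u' where "cx_rank_one J g u' w = u" and "\<forall>G. csubspace J G \<longrightarrow> u \<in> G \<longrightarrow> u' \<in> G"
proof -
  define b where "b = g (J w)"
  \<comment> \<open>in complex notation \<open>u' = u / (1 - i b)\<close>, since \<open>\<phi> w = 1 - i b\<close>\<close>
  define u' where "u' = (1 / (1 + b\<^sup>2)) *\<^sub>R (u + b *\<^sub>R J u)"
  have b: "1 + b\<^sup>2 > 0" by (simp add: add_pos_nonneg)
  have Ju': "J u' = (1 / (1 + b\<^sup>2)) *\<^sub>R (J u - b *\<^sub>R u)"
    unfolding u'_def using complex_structureD(1,2)[OF J]
    by (simp add: linear_add linear_scale scaleR_diff_right)
  have sq: "(u + b *\<^sub>R J u) - b *\<^sub>R (J u - b *\<^sub>R u) = (1 + b\<^sup>2) *\<^sub>R u"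
    by (simp add: algebra_simps power2_eq_square)
  have "cx_rank_one J g u' w = u' - b *\<^sub>R J u'" unfolding cx_rank_one_def b_def using assms(2) by simp
  also have "\<dots> = (1 / (1 + b\<^sup>2)) *\<^sub>R ((u + b *\<^sub>R J u) - b *\<^sub>R (J u - b *\<^sub>R u))"
    unfolding Ju' by (simp add: u'_def algebra_simps)
  also have "\<dots> = u" unfolding sq using b by simp
  finally have eq: "cx_rank_one J g u' w = u" .
  have mem: "u' \<in> G" if "csubspace J G" "u \<in> G" for G
  proof -
    have "subspace G" "J u \<in> G" using that by (auto simp: csubspace_def)
    then show ?thesis unfolding u'_def using that(2) by (intro subspace_scale subspace_add)
  qed
  show ?thesis using mem by (intro that[OF eq]) blast
qed

lemma nestD:
  assumes "nest J \<E>"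
  shows nest_closed: "G \<in> \<E> \<Longrightarrow> closed G"
    and nest_csubspace: "G \<in> \<E> \<Longrightarrow> csubspace J G"
    and nest_total: "A \<in> \<E> \<Longrightarrow> B \<in> \<E> \<Longrightarrow> A \<subseteq> B \<or> B \<subseteq> A"
  using assms by (simp_all add: nest_def)

lemma cx_rank_one_nest_alg:
  assumes J: "complex_structure J" and "nest J \<E>" and g: "bounded_linear g"
    and split: "\<And>G. G \<in> \<E> \<Longrightarrow> (\<forall>z\<in>G. g z = 0) \<or> u \<in> G"
  shows "cx_rank_one J g u \<in> nest_alg J \<E>"
  unfolding nest_alg_def
proof (intro CollectI conjI ballI cx_rank_one_bops[OF J g])
  fix G assume G: "G \<in> \<E>"
  then have cG: "csubspace J G" by (rule nest_csubspace[OF assms(2)])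
  show "cx_rank_one J g u ` G \<subseteq> G"
  proof (rule image_subsetI)
    fix z assume "z \<in> G"
    from split[OF G] show "cx_rank_one J g u z \<in> G"
    proof
      assume "\<forall>z\<in>G. g z = 0"
      moreover have "J z \<in> G" using cG \<open>z \<in> G\<close> by (simp add: csubspace_def)
      ultimately have "cx_rank_one J g u z = 0" using \<open>z \<in> G\<close> by (simp add: cx_rank_one_def)
      then show ?thesis using cG by (simp add: csubspace_def subspace_0)
    next
      assume "u \<in> G"
      with cG show ?thesis by (rule cx_rank_one_in_csubspace)
    qed
  qed
qed

lemma finite_rank_comp:
  assumes "linear T" and "finite_rank R"
  shows "finite_rank (T \<circ> R)"
proof -
  obtain F where "finite F" and F: "range R \<subseteq> span F" using assms(2) finite_rank_def by blast
  have "range (T \<circ> R) \<subseteq> T ` span F" using F by (auto simp: image_comp[symmetric])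
  also have "\<dots> = span (T ` F)" by (rule linear_span_image[OF assms(1), symmetric])
  finally show ?thesis using \<open>finite F\<close> unfolding finite_rank_def by blast
qed

lemma finite_rank_cx_rank_one: "finite_rank (cx_rank_one J g u)"
  unfolding finite_rank_def using cx_rank_one_in_span by blast

lemma bimodule_factor_finite_rank:
  assumes J: "complex_structure J" and nest: "nest J \<E>" and bim: "bimodule J \<E> \<J>"
    and T: "T \<in> \<J>" and C: "closed C" "subspace C" "w \<notin> C"
    and split: "\<forall>G\<in>\<E>. G \<subseteq> C \<or> u \<in> G"
  shows "\<exists>S\<in>finite_rank_part \<J>. S w = T u"
proof -
  obtain g :: "'a \<Rightarrow> real" where g: "bounded_linear g" "\<And>c. c \<in> C \<Longrightarrow> g c = 0" "g w = 1"
    using bounded_functional_separating[OF C] by blast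
  obtain u' where u': "cx_rank_one J g u' w = u" "\<forall>G. csubspace J G \<longrightarrow> u \<in> G \<longrightarrow> u' \<in> G"
    using cx_rank_one_attains[OF J, of g w] g(3) by blast
  have "cx_rank_one J g u' \<in> nest_alg J \<E>"
  proof (rule cx_rank_one_nest_alg[OF J nest g(1)])
    fix G assume "G \<in> \<E>"
    then show "(\<forall>z\<in>G. g z = 0) \<or> u' \<in> G"
      using split g(2) u'(2) nest_csubspace[OF nest] by blast
  qed
  then have "T \<circ> cx_rank_one J g u' \<in> \<J>" using bim T by (simp add: bimodule_def)
  moreover have "linear T"
    using bim T by (auto simp: bimodule_def op_csubspace_def bops_def bounded_linear.linear)
  with finite_rank_cx_rank_one have "finite_rank (T \<circ> cx_rank_one J g u')"
    by (intro finite_rank_comp)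
  ultimately have "T \<circ> cx_rank_one J g u' \<in> finite_rank_part \<J>" by (simp add: finite_rank_part_def)
  moreover have "(T \<circ> cx_rank_one J g u') w = T u" using u'(1) by simp
  ultimately show ?thesis by blast
qed

section \<open>Finite rank operators generate \<open>\<Phi>\<^sub>\<J>\<close>\<close>

definition nest_predecessor :: "'a::real_normed_vector set set \<Rightarrow> 'a set \<Rightarrow> 'a set" where
  "nest_predecessor \<E> E = closure (span (\<Union>{K \<in> \<E>. K \<subset> E}))"

lemma apply_below_in_Phi_finite_rank:
  assumes J: "complex_structure J" and nest: "nest J \<E>" and bim: "bimodule J \<E> \<J>"
    and T: "T \<in> \<J>" and K: "K \<in> \<E>" "K \<subset> E" and "z \<in> K"
  shows "T z \<in> Phi J (finite_rank_part \<J>) E"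
proof -
  obtain w where "w \<in> E" "w \<notin> K" using K(2) by blast
  have "closed K" "subspace K"
    using nest_closed[OF nest K(1)] nest_csubspace[OF nest K(1)] by (auto simp: csubspace_def)
  moreover have "\<forall>G\<in>\<E>. G \<subseteq> K \<or> z \<in> G"
    using nest_total[OF nest _ K(1)] \<open>z \<in> K\<close> by blast
  ultimately obtain S where "S \<in> finite_rank_part \<J>" "S w = T z"
    using \<open>w \<notin> K\<close> bimodule_factor_finite_rank[OF J nest bim T] by blast
  then show ?thesis using apply_in_Phi[OF _ \<open>w \<in> E\<close>] by metis
qed

lemma apply_nest_predecessor_in_Phi_finite_rank:
  assumes J: "complex_structure J" and nest: "nest J \<E>" and bim: "bimodule J \<E> \<J>"
    and T: "T \<in> \<J>" and "z \<in> nest_predecessor \<E> E"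
  shows "T z \<in> Phi J (finite_rank_part \<J>) E"
proof -
  let ?P = "Phi J (finite_rank_part \<J>) E" and ?U = "\<Union>{K \<in> \<E>. K \<subset> E}"
  have P: "closed ?P" "subspace ?P"
    using closed_Phi csubspace_Phi[OF J] by (auto simp: csubspace_def)
  have "bounded_linear T" using bim T by (auto simp: bimodule_def op_csubspace_def bops_def)
  have "T ` ?U \<subseteq> ?P"
  proof (rule image_subsetI)
    fix y assume "y \<in> ?U"
    then obtain K where "K \<in> \<E>" "K \<subset> E" "y \<in> K" by blast
    then show "T y \<in> ?P" by (rule apply_below_in_Phi_finite_rank[OF J nest bim T])
  qed
  then have "T ` span ?U \<subseteq> ?P"
    unfolding linear_span_image[OF bounded_linear.linear[OF \<open>bounded_linear T\<close>], symmetric]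
    using P(2) by (rule span_minimal)
  then have "closure (T ` span ?U) \<subseteq> ?P" using P(1) by (rule closure_minimal)
  moreover have "T ` nest_predecessor \<E> E \<subseteq> closure (T ` span ?U)"
    unfolding nest_predecessor_def by (rule closure_bounded_linear_image_subset[OF \<open>bounded_linear T\<close>])
  ultimately show ?thesis using assms(5) by (meson image_subset_iff subset_trans)
qed

lemma apply_outside_nest_predecessor_in_Phi_finite_rank:
  assumes J: "complex_structure J" and nest: "nest J \<E>" and bim: "bimodule J \<E> \<J>"
    and T: "T \<in> \<J>" and E: "E \<in> \<E>" and "x \<in> E" and "x \<notin> nest_predecessor \<E> E"
  shows "T x \<in> Phi J (finite_rank_part \<J>) E"
proof -
  have "closed (nest_predecessor \<E> E)" "subspace (nest_predecessor \<E> E)"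
    unfolding nest_predecessor_def by (auto intro: subspace_closure subspace_span)
  moreover have "\<forall>G\<in>\<E>. G \<subseteq> nest_predecessor \<E> E \<or> x \<in> G"
  proof
    fix G assume G: "G \<in> \<E>"
    show "G \<subseteq> nest_predecessor \<E> E \<or> x \<in> G"
    proof (cases "E \<subseteq> G")
      case False
      then have "G \<subset> E" using nest_total[OF nest G E] by blast
      with G have "G \<subseteq> \<Union>{K \<in> \<E>. K \<subset> E}" by blast
      also have "\<dots> \<subseteq> nest_predecessor \<E> E"
        unfolding nest_predecessor_def by (rule subset_trans[OF span_superset closure_subset])
      finally show ?thesis ..
    qed (use \<open>x \<in> E\<close> in blast)
  qed
  ultimately obtain S where "S \<in> finite_rank_part \<J>" "S x = T x"
    using assms(7) bimodule_factor_finite_rank[OF J nest bim T] by blast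
  then show ?thesis using apply_in_Phi[OF _ \<open>x \<in> E\<close>] by metis
qed

lemma Phi_finite_rank_part:
  assumes J: "complex_structure J" and nest: "nest J \<E>" and bim: "bimodule J \<E> \<J>" and E: "E \<in> \<E>"
  shows "Phi J (finite_rank_part \<J>) E = Phi J \<J> E"
proof
  show "Phi J (finite_rank_part \<J>) E \<subseteq> Phi J \<J> E" by (rule Phi_mono) (auto simp: finite_rank_part_def)
  show "Phi J \<J> E \<subseteq> Phi J (finite_rank_part \<J>) E"
  proof (rule Phi_least[OF J])
    fix T x assume T: "T \<in> \<J>" and "x \<in> E"
    show "T x \<in> Phi J (finite_rank_part \<J>) E"
    proof (cases "x \<in> nest_predecessor \<E> E")
      case True
      then show ?thesis by (rule apply_nest_predecessor_in_Phi_finite_rank[OF J nest bim T])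
    next
      case False
      with \<open>x \<in> E\<close> show ?thesis by (rule apply_outside_nest_predecessor_in_Phi_finite_rank[OF J nest bim T E])
    qed
  qed
qed

theorem mainTheorem8:
  fixes J :: "'a::banach \<Rightarrow> 'a" and \<E> :: "'a set set" and \<J> :: "('a \<Rightarrow> 'a) set"
  assumes "complex_structure J"
    and "nest J \<E>"
    and "bimodule J \<E> \<J>"
  shows "\<forall>E\<in>\<E>. Phi J (finite_rank_part \<J>) E = Phi J (op_closure J (finite_rank_part \<J>)) E
               \<and> Phi J (op_closure J (finite_rank_part \<J>)) E = Phi J \<J> E"
proof
  fix E assume "E \<in> \<E>"
  have "finite_rank_part \<J> \<subseteq> bops J"
    using assms(3) by (auto simp: bimodule_def op_csubspace_def finite_rank_part_def)
  then have "Phi J (op_closure J (finite_rank_part \<J>)) E = Phi J (finite_rank_part \<J>) E"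
    by (rule Phi_op_closure[OF assms(1)])
  moreover have "Phi J (finite_rank_part \<J>) E = Phi J \<J> E"
    using assms \<open>E \<in> \<E>\<close> by (rule Phi_finite_rank_part)
  ultimately show "Phi J (finite_rank_part \<J>) E = Phi J (op_closure J (finite_rank_part \<J>)) E
               \<and> Phi J (op_closure J (finite_rank_part \<J>)) E = Phi J \<J> E" by simp
qed

end
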